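(* Let $\mathcal{A}$ be an $[n_a,k_a]_q$ cyclic code with minimum Hamming distance $d_a$ and let $\mathcal{B}$ be an $[n_b,k_b]_q$ cyclic code with minimum Hamming distance $d_b$, where $\gcd(n_a,n_b)=1$. Let $\alpha$ be an element of order $n_a$ in $\mathbb{F}_{q^{s_a}}$ and $\beta$ an element of order $n_b$ in $\mathbb{F}_{q^{s_b}}$. Let $f_1,f_2,m_1,m_2,\delta,\nu$ be integers with $m_1\neq 0$, $m_2\neq 0$, $\gcd(n_a,m_1)=\gcd(n_b,m_2)=1$, $\delta\geq 2$ and $\nu>0$, such that $$\sum_{i=0}^{\infty} a(\alpha^{f_1+im_1+j})\cdot b(\beta^{f_2+im_2+j})\,X^i \equiv 0 \bmod X^{\delta-1}\quad \text{for all } j=0,1,\dots,\nu$$ holds for all codewords $a(X)\in\mathcal{A}$ and $b(X)\in\mathcal{B}$ (the power series being over $\mathbb{F}_{q^s}$ with $s=\mathrm{lcm}(s_a,s_b)$). Then $$d_a \geq \left\lceil \frac{\delta+\nu}{d_b}\right\rceil.$$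
   Context: A cyclic $[n,k]_q$ code is an ideal of $\mathbb{F}_q[X]/(X^n-1)$; codewords are identified with polynomials $c(X)=\sum_{i=0}^{n-1}c_iX^i$ of degree less than $n$, and $c(\gamma)$ denotes evaluation of this polynomial at $\gamma$ in an extension field of $\mathbb{F}_q$. *)

theory Defs
  imports "HOL-Computational_Algebra.Polynomial"
begin

definition is_subfield :: "'f::field set \<Rightarrow> bool" where
  "is_subfield K \<longleftrightarrow> 0 \<in> K \<and> 1 \<in> K \<and>
     (\<forall>x\<in>K. \<forall>y\<in>K. x + y \<in> K \<and> x * y \<in> K) \<and>
     (\<forall>x\<in>K. - x \<in> K) \<and> (\<forall>x\<in>K. x \<noteq> 0 \<longrightarrow> inverse x \<in> K)"

definition elem_order :: "'f::field \<Rightarrow> nat \<Rightarrow> bool" where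
  "elem_order x n \<longleftrightarrow> 0 < n \<and> x ^ n = 1 \<and> (\<forall>m. 0 < m \<and> m < n \<longrightarrow> x ^ m \<noteq> 1)"

text \<open>Cyclic code of length n over the subfield K (= F_q) of the ambient field:
  an ideal of K[X]/(X^n - 1), codewords being the polynomials of degree < n with
  coefficients in K.\<close>
definition cyclic_code :: "'f::field set \<Rightarrow> nat \<Rightarrow> 'f poly set \<Rightarrow> bool" where
  "cyclic_code K n C \<longleftrightarrow> 0 < n \<and>
     (\<forall>c\<in>C. degree c < n \<and> (\<forall>i. coeff c i \<in> K)) \<and>
     0 \<in> C \<and>
     (\<forall>c\<in>C. \<forall>e\<in>C. c + e \<in> C) \<and>
     (\<forall>c\<in>C. \<forall>t\<in>K. smult t c \<in> C) \<and>
     (\<forall>c\<in>C. (monom 1 1 * c) mod (monom 1 n - 1) \<in> C)"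

definition hweight :: "'f::zero poly \<Rightarrow> nat" where
  "hweight c = card {i. coeff c i \<noteq> 0}"

text \<open>Minimum Hamming distance d of a (linear) code: minimum weight of a nonzero codeword.\<close>
definition min_distance :: "'f::zero poly set \<Rightarrow> nat \<Rightarrow> bool" where
  "min_distance C d \<longleftrightarrow> (\<exists>c\<in>C. c \<noteq> 0 \<and> hweight c = d) \<and>
     (\<forall>c\<in>C. c \<noteq> 0 \<longrightarrow> d \<le> hweight c)"

end

theory Submission
  imports Defs
begin

text \<open>
  Take codewords \<open>a \<in> A\<close>, \<open>b \<in> B\<close> of minimum weight, with supports \<open>S\<^sub>a\<close> and \<open>S\<^sub>b\<close>.
  The product \<open>a(\<alpha>^(f1 + i m1 + j)) b(\<beta>^(f2 + i m2 + j))\<close> is a sum over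
  \<open>t = (u, w) \<in> S\<^sub>a \<times> S\<^sub>b\<close> of terms \<open>c t * X t ^ i * Y t ^ j\<close> with \<open>c t \<noteq> 0\<close>,
  \<open>X (u, w) = \<alpha>^(u m1) \<beta>^(w m2)\<close> and \<open>Y (u, w) = \<alpha>^u \<beta>^w\<close>; coprimality of the orders
  makes \<open>X\<close> and \<open>Y\<close> injective. If these sums vanish for all \<open>i < \<delta> - 1\<close>, \<open>j \<le> \<nu>\<close> while
  there are fewer than \<open>\<delta> + \<nu>\<close> terms, fix one term \<open>t\<^sub>0\<close> and take a polynomial \<open>p\<close> of
  degree \<open>< \<delta> - 1\<close> vanishing at \<open>X\<close> of some other terms and \<open>r\<close> of degree \<open>\<le> \<nu>\<close>
  vanishing at \<open>Y\<close> of the remaining ones. Then \<open>\<Sum>t. c t * p (X t) * r (Y t)\<close> is \<open>0\<close> by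
  linearity, yet equals the nonzero term of \<open>t\<^sub>0\<close>. Hence \<open>d\<^sub>a d\<^sub>b \<ge> \<delta> + \<nu>\<close>.
\<close>

lemma poly_eq_sum_lessThan:
  fixes p :: "'a::comm_semiring_1 poly"
  assumes "degree p < D"
  shows "poly p x = (\<Sum>i<D. coeff p i * x ^ i)"
  unfolding poly_altdef
  by (rule sum.mono_neutral_left) (use assms in \<open>auto simp: coeff_eq_0\<close>)

lemma poly_eq_sum_coeff_support:
  fixes p :: "'a::comm_semiring_1 poly"
  shows "poly p x = (\<Sum>u\<in>{u. coeff p u \<noteq> 0}. coeff p u * x ^ u)"
  unfolding poly_altdef
  by (rule sum.mono_neutral_right) (auto intro: le_degree)

lemma finite_coeff_support: "finite {u. coeff (p::'a::zero poly) u \<noteq> 0}"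
  by (rule finite_subset[of _ "{..degree p}"]) (auto intro: le_degree)

lemma hweight_pos: "p \<noteq> 0 \<Longrightarrow> 0 < hweight p"
  unfolding hweight_def card_gt_0_iff using finite_coeff_support leading_coeff_neq_0 by blast

lemma sum_poly_poly_eq_zero_if_moments_vanish:
  fixes c X Y :: "'t \<Rightarrow> 'f::field"
  assumes "degree p < D" and "degree r \<le> V"
    and moments: "\<And>i j. i < D \<Longrightarrow> j \<le> V \<Longrightarrow> (\<Sum>t\<in>T. c t * X t ^ i * Y t ^ j) = 0"
  shows "(\<Sum>t\<in>T. c t * poly p (X t) * poly r (Y t)) = 0"
proof -
  have "(\<Sum>t\<in>T. c t * poly p (X t) * poly r (Y t))
      = (\<Sum>t\<in>T. \<Sum>i<D. \<Sum>j<Suc V. coeff p i * coeff r j * (c t * X t ^ i * Y t ^ j))"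
    using assms(1,2)
    by (simp only: poly_eq_sum_lessThan[of p D] poly_eq_sum_lessThan[of r "Suc V"] le_imp_less_Suc
        sum_distrib_left sum_distrib_right mult_ac)
  also have "\<dots> = (\<Sum>i<D. \<Sum>j<Suc V. coeff p i * coeff r j * (\<Sum>t\<in>T. c t * X t ^ i * Y t ^ j))"
    by (simp only: sum_distrib_left sum.swap[of _ T])
  also have "\<dots> = 0"
    using moments by (simp del: lessThan_Suc add: less_Suc_eq_le)
  finally show ?thesis .
qed

lemma card_ge_if_moments_vanish:
  fixes c X Y :: "'t \<Rightarrow> 'f::field"
  assumes "finite T" and "T \<noteq> {}" and c: "\<And>t. t \<in> T \<Longrightarrow> c t \<noteq> 0"
    and "inj_on X T" and "inj_on Y T" and "D \<ge> 1"
    and moments: "\<And>i j. i < D \<Longrightarrow> j \<le> V \<Longrightarrow> (\<Sum>t\<in>T. c t * X t ^ i * Y t ^ j) = 0"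
  shows "D + V + 1 \<le> card T"
proof (rule ccontr)
  assume "\<not> D + V + 1 \<le> card T"
  obtain t0 where t0: "t0 \<in> T" using \<open>T \<noteq> {}\<close> by blast
  define R where "R = T - {t0}"
  have "finite R" using \<open>finite T\<close> by (simp add: R_def)
  have "card R < D + V"
    using \<open>\<not> D + V + 1 \<le> card T\<close> \<open>finite T\<close> t0 \<open>D \<ge> 1\<close> by (simp add: R_def card_Diff_singleton)
  obtain S1 where S1: "S1 \<subseteq> R" "card S1 = min (card R) (D - 1)"
    using obtain_subset_with_card_n[of "min (card R) (D - 1)" R] by auto
  define S2 where "S2 = R - S1"
  have fin: "finite S1" "finite S2"
    using S1(1) \<open>finite R\<close> finite_subset by (auto simp: S2_def)
  have "card S2 \<le> V"
    using S1(2) \<open>card R < D + V\<close> \<open>D \<ge> 1\<close> by (simp add: S2_def card_Diff_subset[OF fin(1) S1(1)])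
  define p where "p = (\<Prod>s\<in>S1. [:- X s, 1:])"
  define r where "r = (\<Prod>s\<in>S2. [:- Y s, 1:])"
  have "degree p < D" "degree r \<le> V"
    using S1(2) \<open>D \<ge> 1\<close> \<open>card S2 \<le> V\<close> fin by (simp_all add: p_def r_def degree_prod_eq_sum_degree)
  then have sum0: "(\<Sum>t\<in>T. c t * poly p (X t) * poly r (Y t)) = 0"
    using moments by (rule sum_poly_poly_eq_zero_if_moments_vanish)
  have poly_pr: "poly p x = (\<Prod>s\<in>S1. x - X s)" "poly r y = (\<Prod>s\<in>S2. y - Y s)" for x y
    by (simp_all add: p_def r_def poly_prod)
  have "(\<Sum>t\<in>R. c t * poly p (X t) * poly r (Y t)) = 0"
    by (rule sum.neutral) (use fin in \<open>auto simp: poly_pr prod_zero_iff S2_def\<close>)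
  with sum0 have "c t0 * poly p (X t0) * poly r (Y t0) = 0"
    using \<open>finite T\<close> t0 by (simp add: R_def sum.remove)
  moreover have "poly p (X t0) \<noteq> 0"
  proof -
    have "X t0 \<noteq> X s" if "s \<in> S1" for s
      using inj_onD[OF \<open>inj_on X T\<close>] that S1(1) t0 by (fastforce simp: R_def)
    then show ?thesis using fin(1) by (simp add: poly_pr)
  qed
  moreover have "poly r (Y t0) \<noteq> 0"
  proof -
    have "Y t0 \<noteq> Y s" if "s \<in> S2" for s
      using inj_onD[OF \<open>inj_on Y T\<close>] that t0 by (fastforce simp: S2_def R_def)
    then show ?thesis using fin(2) by (simp add: poly_pr)
  qed
  moreover note c[OF t0]
  ultimately show False by simp
qed

lemma elem_order_nonzero: "elem_order (x::'f::field) n \<Longrightarrow> x \<noteq> 0"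
  unfolding elem_order_def by (metis power_0_left zero_neq_one less_not_refl2)

lemma elem_order_power_int_eq_one_iff:
  fixes x :: "'f::field"
  assumes "elem_order x n"
  shows "x powi e = 1 \<longleftrightarrow> int n dvd e"
proof -
  have n: "0 < n" "x ^ n = 1" "\<And>m. 0 < m \<Longrightarrow> m < n \<Longrightarrow> x ^ m \<noteq> 1"
    using assms unfolding elem_order_def by auto
  have "e = int n * (e div int n) + e mod int n" by simp
  then have "x powi e = x powi (int n * (e div int n)) * x powi (e mod int n)"
    using elem_order_nonzero[OF assms] by (metis power_int_add)
  also have "\<dots> = x ^ nat (e mod int n)"
    using n(1,2) by (simp add: power_int_mult power_int_nonneg_exp)
  finally have "x powi e = 1 \<longleftrightarrow> x ^ nat (e mod int n) = 1" by simp
  also have "\<dots> \<longleftrightarrow> nat (e mod int n) = 0"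
  proof
    assume "x ^ nat (e mod int n) = 1"
    moreover have "nat (e mod int n) < n" using n(1) by (simp add: nat_less_iff)
    ultimately show "nat (e mod int n) = 0" using n(3) by (meson neq0_conv)
  qed simp
  also have "\<dots> \<longleftrightarrow> int n dvd e"
    using pos_mod_sign[of "int n" e] n(1) by (auto simp: dvd_eq_mod_eq_0 intro: order.antisym)
  finally show ?thesis .
qed

lemma power_int_power_eq_one:
  fixes x :: "'f::field"
  assumes "x ^ n = 1"
  shows "(x powi k) ^ n = 1"
proof -
  have "(x powi k) ^ n = x powi (int n * k)" by (simp add: power_int_power' mult.commute)
  also have "\<dots> = 1" by (simp add: power_int_mult assms)
  finally show ?thesis .
qed

lemma eq_one_if_coprime_exponents:
  fixes z :: "'f::field"
  assumes "z ^ na = 1" "z ^ nb = 1" "coprime na nb"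
  shows "z = 1"
proof -
  obtain s t :: int where st: "s * int na + t * int nb = 1"
    using bezout_int[of "int na" "int nb"] assms(3) by (auto simp: coprime_iff_gcd_eq_1 gcd_int_int_eq)
  have "z \<noteq> 0"
  proof
    assume "z = 0"
    with assms(1,2) have "na = 0" "nb = 0" by (auto simp: power_0_left split: if_splits)
    with assms(3) show False by simp
  qed
  have "z = z powi (s * int na + t * int nb)" using st by simp
  also have "\<dots> = z powi (int na * s) * z powi (int nb * t)"
    using \<open>z \<noteq> 0\<close> by (simp add: power_int_add mult.commute)
  also have "\<dots> = 1" by (simp add: power_int_mult assms(1,2))
  finally show ?thesis .
qed

lemma elem_order_cancel_coprime:
  fixes x :: "'f::field"
  assumes "elem_order x n" "coprime (int n) m" "x powi (d * m) = 1" "\<bar>d\<bar> < int n"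
  shows "d = 0"
proof -
  have "int n dvd d * m" using elem_order_power_int_eq_one_iff[OF assms(1)] assms(3) by simp
  then have "int n dvd d" using assms(2) by (simp add: coprime_dvd_mult_left_iff)
  show ?thesis
  proof (rule ccontr)
    assume "d \<noteq> 0"
    with dvd_imp_le_int[OF this \<open>int n dvd d\<close>] have "int n \<le> \<bar>d\<bar>" by simp
    with assms(4) show False by simp
  qed
qed

text \<open>A collision of \<open>(u, w) \<mapsto> \<alpha>^(u m1) \<beta>^(w m2)\<close> yields an element that is both an
  \<open>na\<close>-th and an \<open>nb\<close>-th root of unity.\<close>
lemma inj_on_power_int_prod:
  fixes \<alpha> \<beta> :: "'f::field"
  assumes oa: "elem_order \<alpha> na" and ob: "elem_order \<beta> nb" and "coprime na nb"
    and "coprime (int na) m1" and "coprime (int nb) m2"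
  shows "inj_on (\<lambda>(u, w). \<alpha> powi (int u * m1) * \<beta> powi (int w * m2)) ({..<na} \<times> {..<nb})"
proof (rule inj_onI, clarsimp)
  fix u w u' w'
  assume eq: "\<alpha> powi (int u * m1) * \<beta> powi (int w * m2) = \<alpha> powi (int u' * m1) * \<beta> powi (int w' * m2)"
    and "u < na" "w < nb" "u' < na" "w' < nb"
  have nz: "\<alpha> \<noteq> 0" "\<beta> \<noteq> 0" using oa ob by (simp_all add: elem_order_nonzero)
  define z where "z = \<alpha> powi ((int u - int u') * m1)"
  have z_beta: "z = \<beta> powi ((int w' - int w) * m2)"
    using eq nz by (simp add: z_def left_diff_distrib power_int_diff field_simps)
  have "z ^ na = 1" using oa unfolding z_def elem_order_def by (simp add: power_int_power_eq_one)
  moreover have "z ^ nb = 1" using ob unfolding z_beta elem_order_def by (simp add: power_int_power_eq_one)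
  ultimately have "z = 1" using \<open>coprime na nb\<close> by (rule eq_one_if_coprime_exponents)
  have "int u - int u' = 0"
    by (rule elem_order_cancel_coprime[OF oa \<open>coprime (int na) m1\<close>])
      (use \<open>z = 1\<close> z_def \<open>u < na\<close> \<open>u' < na\<close> in auto)
  moreover have "int w' - int w = 0"
    by (rule elem_order_cancel_coprime[OF ob \<open>coprime (int nb) m2\<close>])
      (use \<open>z = 1\<close> z_beta \<open>w < nb\<close> \<open>w' < nb\<close> in auto)
  ultimately show "u = u' \<and> w = w'" by simp
qed

lemma poly_power_int_affine:
  fixes x :: "'f::field"
  assumes "x \<noteq> 0"
  shows "poly p (x powi (f + int i * m + int j))
       = (\<Sum>u\<in>{u. coeff p u \<noteq> 0}. coeff p u * x powi (int u * f) * (x powi (int u * m)) ^ i * (x ^ u) ^ j)"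
  unfolding poly_eq_sum_coeff_support
proof (rule sum.cong[OF refl])
  fix u
  have "(x powi (f + int i * m + int j)) ^ u = x powi (int u * f + int u * m * int i + int (u * j))"
    by (simp add: power_int_power' algebra_simps)
  also have "\<dots> = x powi (int u * f) * (x powi (int u * m)) ^ i * (x ^ u) ^ j"
    using assms by (simp add: power_int_add power_int_power' power_mult flip: of_nat_mult)
  finally show "coeff p u * (x powi (f + int i * m + int j)) ^ u
           = coeff p u * x powi (int u * f) * (x powi (int u * m)) ^ i * (x ^ u) ^ j"
    by (simp add: mult.assoc)
qed

lemma hweight_mult_ge:
  fixes a b :: "'f::field poly" and \<alpha> \<beta> :: 'f
  assumes "a \<noteq> 0" "b \<noteq> 0" "degree a < na" "degree b < nb"
    and oa: "elem_order \<alpha> na" and ob: "elem_order \<beta> nb" and "coprime na nb"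
    and "coprime (int na) m1" and "coprime (int nb) m2" and "D \<ge> 1"
    and vanish: "\<And>i j. i < D \<Longrightarrow> j \<le> V \<Longrightarrow>
       poly a (\<alpha> powi (f1 + int i * m1 + int j)) * poly b (\<beta> powi (f2 + int i * m2 + int j)) = 0"
  shows "D + V + 1 \<le> hweight a * hweight b"
proof -
  define Sa where "Sa = {u. coeff a u \<noteq> 0}"
  define Sb where "Sb = {w. coeff b w \<noteq> 0}"
  define T where "T = Sa \<times> Sb"
  define c where "c = (\<lambda>(u, w). coeff a u * coeff b w * \<alpha> powi (int u * f1) * \<beta> powi (int w * f2))"
  define X where "X = (\<lambda>(u, w). \<alpha> powi (int u * m1) * \<beta> powi (int w * m2))"
  define Y where "Y = (\<lambda>(u, w). \<alpha> ^ u * \<beta> ^ w)"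
  have nz: "\<alpha> \<noteq> 0" "\<beta> \<noteq> 0" using oa ob by (simp_all add: elem_order_nonzero)
  have fin: "finite Sa" "finite Sb" unfolding Sa_def Sb_def by (rule finite_coeff_support)+
  have bounded: "Sa \<subseteq> {..<na}" "Sb \<subseteq> {..<nb}"
    using assms(3,4) le_degree by (fastforce simp: Sa_def Sb_def)+
  have inj: "inj_on (\<lambda>(u, w). \<alpha> powi (int u * k1) * \<beta> powi (int w * k2)) T"
    if "coprime (int na) k1" "coprime (int nb) k2" for k1 k2
    by (rule inj_on_subset[OF inj_on_power_int_prod[OF oa ob \<open>coprime na nb\<close> that]])
      (use bounded in \<open>auto simp: T_def\<close>)
  have "finite T" "T \<noteq> {}"
    using fin hweight_pos[OF \<open>a \<noteq> 0\<close>] hweight_pos[OF \<open>b \<noteq> 0\<close>]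
    by (auto simp: T_def Sa_def Sb_def hweight_def card_gt_0_iff)
  moreover have "c t \<noteq> 0" if "t \<in> T" for t
    using that nz by (auto simp: T_def Sa_def Sb_def c_def)
  moreover have "inj_on X T" using inj[OF assms(8,9)] by (simp add: X_def)
  moreover have "inj_on Y T" using inj[of 1 1] by (simp add: Y_def)
  moreover note \<open>D \<ge> 1\<close>
  moreover have "(\<Sum>t\<in>T. c t * X t ^ i * Y t ^ j) = 0" if "i < D" "j \<le> V" for i j
  proof -
    have "(\<Sum>t\<in>T. c t * X t ^ i * Y t ^ j)
        = poly a (\<alpha> powi (f1 + int i * m1 + int j)) * poly b (\<beta> powi (f2 + int i * m2 + int j))"
      unfolding poly_power_int_affine[OF nz(1)] poly_power_int_affine[OF nz(2)]
        sum_product sum.cartesian_product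
      by (rule sum.cong) (auto simp: T_def Sa_def Sb_def c_def X_def Y_def
          power_mult_distrib power_int_of_nat mult_ac)
    with vanish that show ?thesis by simp
  qed
  ultimately have "D + V + 1 \<le> card T"
    by (rule card_ge_if_moments_vanish)
  then show ?thesis by (simp add: T_def Sa_def Sb_def hweight_def card_cartesian_product)
qed

theorem theorem5:
  fixes K Fa Fb :: "'f::{finite,field} set"
    and q na nb sa sb da db :: nat
    and A B :: "'f poly set"
    and \<alpha> \<beta> :: 'f
    and f1 f2 m1 m2 \<delta> \<nu> :: int
  assumes K: "is_subfield K" "card K = q"
    and Fa: "is_subfield Fa" "card Fa = q ^ sa"
    and Fb: "is_subfield Fb" "card Fb = q ^ sb"
    and Fs: "card (UNIV :: 'f set) = q ^ lcm sa sb"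
    and A: "cyclic_code K na A" "min_distance A da"
    and B: "cyclic_code K nb B" "min_distance B db"
    and coprime_n: "gcd na nb = 1"
    and alpha: "\<alpha> \<in> Fa" "elem_order \<alpha> na"
    and beta: "\<beta> \<in> Fb" "elem_order \<beta> nb"
    and m: "m1 \<noteq> 0" "m2 \<noteq> 0" "gcd (int na) m1 = 1" "gcd (int nb) m2 = 1"
    and \<delta>: "\<delta> \<ge> 2" and \<nu>: "\<nu> > 0"
    and hyp: "\<And>a b j i. a \<in> A \<Longrightarrow> b \<in> B \<Longrightarrow> 0 \<le> j \<Longrightarrow> j \<le> \<nu> \<Longrightarrow>
                 i < nat (\<delta> - 1) \<Longrightarrow>
                 poly a (\<alpha> powi (f1 + int i * m1 + j)) * poly b (\<beta> powi (f2 + int i * m2 + j)) = 0"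
  shows "real da \<ge> of_int \<lceil>real_of_int (\<delta> + \<nu>) / real db\<rceil>"
proof -
  obtain a where a: "a \<in> A" "a \<noteq> 0" "hweight a = da" using A(2) unfolding min_distance_def by blast
  obtain b where b: "b \<in> B" "b \<noteq> 0" "hweight b = db" using B(2) unfolding min_distance_def by blast
  have "degree a < na" "degree b < nb" using A(1) B(1) a(1) b(1) unfolding cyclic_code_def by blast+
  moreover have "coprime na nb" "coprime (int na) m1" "coprime (int nb) m2"
    using coprime_n m(3,4) by (simp_all add: coprime_iff_gcd_eq_1)
  moreover have "nat (\<delta> - 1) \<ge> 1" using \<delta> by simp
  moreover have "poly a (\<alpha> powi (f1 + int i * m1 + int j)) * poly b (\<beta> powi (f2 + int i * m2 + int j)) = 0"
    if "i < nat (\<delta> - 1)" "j \<le> nat \<nu>" for i j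
    using hyp[OF a(1) b(1)] that \<nu> by simp
  ultimately have "nat (\<delta> - 1) + nat \<nu> + 1 \<le> hweight a * hweight b"
    by (rule hweight_mult_ge[OF a(2) b(2) _ _ alpha(2) beta(2)])
  then have "\<delta> + \<nu> \<le> int da * int db"
    using \<delta> \<nu> a(3) b(3) by (simp flip: of_nat_le_iff[where 'a = int])
  then have "real_of_int (\<delta> + \<nu>) \<le> real da * real db"
    using of_int_le_iff[of "\<delta> + \<nu>" "int da * int db", where 'a = real] by simp
  moreover have "db > 0" using hweight_pos[OF b(2)] b(3) by simp
  ultimately have "\<lceil>real_of_int (\<delta> + \<nu>) / real db\<rceil> \<le> int da"
    by (simp add: ceiling_le_iff divide_le_eq)
  then show ?thesis by linarith
qed

end
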